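(* Let $T,S\in U(n,1)$ be unipotent (parabolic) elements. Then $ST=TS$ if and only if $S$ and $T$ are isotropic.
   Context: $U(n,1)$ is the unitary group of a Hermitian form of signature $(n,1)$ on $\mathbb{C}^{n+1}$, acting on complex hyperbolic space $H^n_{\mathbb{C}}$ and its boundary. In the Siegel model (form $w^*Jz$ with $J=\begin{pmatrix}0&0&1\\0&I_{n-1}&0\\1&0&0\end{pmatrix}$, boundary point $\infty=\pi((1,0,\dots,0)^t)$), the Heisenberg translations are $T_{(\tau,t)}=\begin{pmatrix}1&-\tau^*&\frac{-|\tau|^2+ti}{2}\\0&I_{n-1}&\tau\\0&0&1\end{pmatrix}$, $(\tau,t)\in\mathbb{C}^{n-1}\times\mathbb{R}$. Two unipotent elements $S,T$ are called isotropic if they have a common boundary fixed point $x$ and, for $K\in U(n,1)$ with $K(x)=\infty$, one has $KTK^{-1}=T_{(\tau,t)}$, $KSK^{-1}=T_{(\sigma,s)}$ with $\mathrm{Im}(\tau^*\sigma)=0$ (independent of the choice of $K$). *)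

theory Defs
  imports Complex_Main "Jordan_Normal_Form.Schur_Decomposition"
begin

text \<open>Siegel model of complex hyperbolic space. Coordinates of C^(n+1) are
  indexed 0..n; the Hermitian form is  <z,w> = w^* J z.\<close>

definition Jmat :: "nat \<Rightarrow> complex mat" where
  "Jmat n = mat (n+1) (n+1) (\<lambda>(i,j).
      if (i = 0 \<and> j = n) \<or> (i = n \<and> j = 0) \<or> (i = j \<and> 0 < i \<and> i < n) then 1 else 0)"

definition herm :: "nat \<Rightarrow> complex vec \<Rightarrow> complex vec \<Rightarrow> complex" where
  "herm n z w = (Jmat n *\<^sub>v z) \<bullet>c w"

definition Un1 :: "nat \<Rightarrow> complex mat set" where
  "Un1 n = {A \<in> carrier_mat (n+1) (n+1). mat_adjoint A * Jmat n * A = Jmat n}"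

definition unipotent :: "nat \<Rightarrow> complex mat \<Rightarrow> bool" where
  "unipotent n A \<longleftrightarrow> A \<in> carrier_mat (n+1) (n+1) \<and>
     (A - 1\<^sub>m (n+1)) ^\<^sub>m (n+1) = 0\<^sub>m (n+1) (n+1)"

text \<open>Null (boundary) and negative (interior) vectors; points of the boundary /
  of H^n_C are their complex lines.\<close>
definition null_vec :: "nat \<Rightarrow> complex vec \<Rightarrow> bool" where
  "null_vec n z \<longleftrightarrow> z \<in> carrier_vec (n+1) \<and> z \<noteq> 0\<^sub>v (n+1) \<and> herm n z z = 0"

definition neg_vec :: "nat \<Rightarrow> complex vec \<Rightarrow> bool" where
  "neg_vec n z \<longleftrightarrow> z \<in> carrier_vec (n+1) \<and> Re (herm n z z) < 0"

text \<open>A fixes the projective point spanned by z\<close>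
definition fixes_pt :: "complex mat \<Rightarrow> complex vec \<Rightarrow> bool" where
  "fixes_pt A z \<longleftrightarrow> (\<exists>c. A *\<^sub>v z = c \<cdot>\<^sub>v z)"

definition same_pt :: "complex vec \<Rightarrow> complex vec \<Rightarrow> bool" where
  "same_pt z w \<longleftrightarrow> (\<exists>c. w = c \<cdot>\<^sub>v z)"

definition parabolic :: "nat \<Rightarrow> complex mat \<Rightarrow> bool" where
  "parabolic n A \<longleftrightarrow> A \<in> Un1 n \<and>
     (\<forall>z. neg_vec n z \<longrightarrow> \<not> fixes_pt A z) \<and>
     (\<exists>z. null_vec n z \<and> fixes_pt A z \<and>
        (\<forall>w. null_vec n w \<and> fixes_pt A w \<longrightarrow> same_pt z w))"

definition e_inf :: "nat \<Rightarrow> complex vec" where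
  "e_inf n = unit_vec (n+1) 0"

definition sqnorm :: "complex vec \<Rightarrow> complex" where
  "sqnorm \<tau> = \<tau> \<bullet>c \<tau>"

text \<open>Heisenberg translation T_(tau,t), tau in C^(n-1) (indexed 0..n-2).\<close>
definition heis :: "nat \<Rightarrow> complex vec \<Rightarrow> real \<Rightarrow> complex mat" where
  "heis n \<tau> t = mat (n+1) (n+1) (\<lambda>(i,j).
      if i = j then 1
      else if i = 0 \<and> 0 < j \<and> j < n then - cnj (\<tau> $ (j-1))
      else if i = 0 \<and> j = n then (- sqnorm \<tau> + complex_of_real t * \<i>) / 2
      else if 0 < i \<and> i < n \<and> j = n then \<tau> $ (i-1)
      else 0)"

text \<open>S, T isotropic: a common boundary fixed point x and K in U(n,1) with K(x) = infinity,
  K T K^-1 = T_(tau,t), K S K^-1 = T_(sigma,s) and Im(tau^* sigma) = 0.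
  K T K^-1 = H is written as K * T = H * K (K is invertible).\<close>
definition isotropic :: "nat \<Rightarrow> complex mat \<Rightarrow> complex mat \<Rightarrow> bool" where
  "isotropic n S T \<longleftrightarrow>
     (\<exists>x. null_vec n x \<and> fixes_pt S x \<and> fixes_pt T x \<and>
       (\<exists>K \<in> Un1 n. same_pt (e_inf n) (K *\<^sub>v x) \<and>
         (\<exists>\<tau> t \<sigma> s. \<tau> \<in> carrier_vec (n-1) \<and> \<sigma> \<in> carrier_vec (n-1) \<and>
            K * T = heis n \<tau> t * K \<and> K * S = heis n \<sigma> s * K \<and>
            Im (\<sigma> \<bullet>c \<tau>) = 0)))"

end

theory Submission
  imports Defs
begin

text \<open>Commuting unipotent parabolics share their boundary fixed point, since \<open>S\<close> maps the unique
  null line fixed by \<open>T\<close> to another null line fixed by \<open>T\<close>. Move that point to \<open>\<infinity> = [e\<^sub>0]\<close>.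
  A unipotent \<open>M \<in> U(n,1)\<close> fixing \<open>\<infinity>\<close> fixes \<open>e\<^sub>0\<close> itself (its eigenvalue is \<open>1\<close>); the form
  then forces its last row to be \<open>e\<^sub>n\<^sup>T\<close> and makes its middle block \<open>A\<close> unitary. Since \<open>A\<close> is
  also unipotent, \<open>A - 1\<close> is normal and nilpotent, so \<open>A = 1\<close>, and the remaining entries make
  \<open>M\<close> a Heisenberg translation. These multiply by \<open>(\<sigma>,s)(\<tau>,t) = (\<sigma>+\<tau>, s+t+2 Im \<langle>\<sigma>,\<tau>\<rangle>)\<close>,
  so they commute iff \<open>Im \<langle>\<sigma>,\<tau>\<rangle> = 0\<close>.\<close>

section \<open>Complex matrices\<close>

lemma index_mult_mat_sum:
  assumes "A \<in> carrier_mat m k" "B \<in> carrier_mat k p" "i < m" "j < p"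
  shows "(A * B) $$ (i,j) = (\<Sum>l\<in>{0..<k}. A $$ (i,l) * B $$ (l,j))"
  using assms by (auto simp: scalar_prod_def)

lemma index_mult_mat_vec_sum:
  assumes "A \<in> carrier_mat m k" "v \<in> carrier_vec k" "i < m"
  shows "(A *\<^sub>v v) $ i = (\<Sum>l\<in>{0..<k}. A $$ (i,l) * v $ l)"
  using assms by (auto simp: scalar_prod_def)

lemma mult_carrier_mat_square [simp]:
  "A \<in> carrier_mat m m \<Longrightarrow> B \<in> carrier_mat m m \<Longrightarrow> A * B \<in> carrier_mat m m"
  by (metis mult_carrier_mat)

lemma mult_mat_vec_zero:
  "A \<in> carrier_mat m k \<Longrightarrow> A *\<^sub>v 0\<^sub>v k = (0\<^sub>v m :: 'a :: comm_ring vec)"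
  by (rule eq_vecI) auto

lemma zero_mat_mult_vec:
  "v \<in> carrier_vec k \<Longrightarrow> 0\<^sub>m m k *\<^sub>v v = (0\<^sub>v m :: 'a :: comm_ring vec)"
  by (rule eq_vecI) (auto simp: scalar_prod_def)

lemma mat_eq_zero_if_mult_vec_zero:
  fixes N :: "'a :: semiring_1 mat"
  assumes N: "N \<in> carrier_mat m k" and zero: "\<And>v. v \<in> carrier_vec k \<Longrightarrow> N *\<^sub>v v = 0\<^sub>v m"
  shows "N = 0\<^sub>m m k"
proof (rule eq_matI)
  fix i j assume ij: "i < dim_row (0\<^sub>m m k :: 'a mat)" "j < dim_col (0\<^sub>m m k :: 'a mat)"
  have "N $$ (i,j) = (N *\<^sub>v unit_vec k j) $ i" using N ij by simp
  also have "\<dots> = 0" using zero[of "unit_vec k j"] ij by simp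
  finally show "N $$ (i,j) = 0\<^sub>m m k $$ (i,j)" using ij by simp
qed (use N in auto)

lemma pow_mat_mult_eigenvector:
  assumes N: "N \<in> carrier_mat m m" and v: "v \<in> carrier_vec m" and Nv: "N *\<^sub>v v = c \<cdot>\<^sub>v v"
  shows "(N ^\<^sub>m k) *\<^sub>v v = (c ^ k) \<cdot>\<^sub>v (v :: 'a :: field vec)"
proof (induction k)
  case (Suc k)
  have "(N ^\<^sub>m Suc k) *\<^sub>v v = (N ^\<^sub>m k) *\<^sub>v (c \<cdot>\<^sub>v v)"
    using N v Nv by (simp add: assoc_mult_mat_vec[of _ m m _ m])
  also have "\<dots> = (c ^ Suc k) \<cdot>\<^sub>v v"
    using N v Suc by (simp add: mult_mat_vec[of _ m m] smult_smult_assoc mult.commute)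
  finally show ?case .
qed (use N v in simp)

lemma unipotent_eigenvalue_eq_one:
  assumes A: "A \<in> carrier_mat m m" and nil: "(A - 1\<^sub>m m) ^\<^sub>m k = 0\<^sub>m m m"
    and v: "v \<in> carrier_vec m" "v \<noteq> 0\<^sub>v m" and Av: "A *\<^sub>v v = c \<cdot>\<^sub>v v"
  shows "c = (1 :: 'a :: field)"
proof -
  have N: "A - 1\<^sub>m m \<in> carrier_mat m m" using A by (intro minus_carrier_mat) auto
  have "(A - 1\<^sub>m m) *\<^sub>v v = (c - 1) \<cdot>\<^sub>v v"
  proof -
    have "(A - 1\<^sub>m m) *\<^sub>v v = A *\<^sub>v v - 1\<^sub>m m *\<^sub>v v"
      using A v by (intro minus_mult_distrib_mat_vec) auto
    also have "\<dots> = c \<cdot>\<^sub>v v - 1 \<cdot>\<^sub>v v" using Av v by simp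
    also have "\<dots> = (c - 1) \<cdot>\<^sub>v v" using v by (intro eq_vecI) (auto simp: algebra_simps)
    finally show ?thesis .
  qed
  from pow_mat_mult_eigenvector[OF N v(1) this, of k] nil v
  have "(c - 1) ^ k \<cdot>\<^sub>v v = 0\<^sub>v m" by (simp add: zero_mat_mult_vec)
  moreover obtain i where "i < m" "v $ i \<noteq> 0" using v by (auto simp: vec_eq_iff)
  ultimately have "(c - 1) ^ k * v $ i = 0" using v(1) by (auto simp: vec_eq_iff)
  with \<open>v $ i \<noteq> 0\<close> show ?thesis by simp
qed

lemma mat_adjoint_dim [simp]:
  "dim_row (mat_adjoint A) = dim_col A" "dim_col (mat_adjoint A) = dim_row A"
  unfolding mat_adjoint_def by auto

lemma mat_adjoint_carrier [simp]: "A \<in> carrier_mat m k \<Longrightarrow> mat_adjoint A \<in> carrier_mat k m"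
  unfolding mat_adjoint_def by auto

lemma mat_adjoint_index:
  "i < dim_col A \<Longrightarrow> j < dim_row A \<Longrightarrow> mat_adjoint A $$ (i,j) = cnj (A $$ (j,i))"
  unfolding mat_adjoint_def mat_of_rows_def by auto

lemma mat_adjoint_adjoint [simp]: "mat_adjoint (mat_adjoint (A :: complex mat)) = A"
  by (rule eq_matI) (auto simp: mat_adjoint_index)

lemma mat_adjoint_one [simp]: "mat_adjoint (1\<^sub>m m) = (1\<^sub>m m :: complex mat)"
  by (rule eq_matI) (auto simp: mat_adjoint_index)

lemma mat_adjoint_mult:
  fixes A B :: "complex mat"
  assumes A: "A \<in> carrier_mat m k" and B: "B \<in> carrier_mat k p"
  shows "mat_adjoint (A * B) = mat_adjoint B * mat_adjoint A"
proof (rule eq_matI)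
  fix i j assume "i < dim_row (mat_adjoint B * mat_adjoint A)" "j < dim_col (mat_adjoint B * mat_adjoint A)"
  hence i: "i < p" and j: "j < m" using A B by auto
  have "mat_adjoint (A * B) $$ (i,j) = cnj ((A * B) $$ (j,i))"
    using A B i j by (simp add: mat_adjoint_index)
  also have "\<dots> = cnj (\<Sum>l\<in>{0..<k}. A $$ (j,l) * B $$ (l,i))"
    by (simp only: index_mult_mat_sum[OF A B j i])
  also have "\<dots> = (\<Sum>l\<in>{0..<k}. mat_adjoint B $$ (i,l) * mat_adjoint A $$ (l,j))"
    unfolding cnj_sum using A B i j by (intro sum.cong) (auto simp: mat_adjoint_index mult.commute)
  also have "\<dots> = (mat_adjoint B * mat_adjoint A) $$ (i,j)"
    using A B i j by (intro index_mult_mat_sum[symmetric]) auto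
  finally show "mat_adjoint (A * B) $$ (i,j) = (mat_adjoint B * mat_adjoint A) $$ (i,j)" .
qed (use A B in auto)

lemma scalar_prod_mult_mat_vec_adjoint:
  fixes A :: "complex mat"
  assumes A: "A \<in> carrier_mat m k" and x: "x \<in> carrier_vec m" and w: "w \<in> carrier_vec k"
  shows "x \<bullet>c (A *\<^sub>v w) = (mat_adjoint A *\<^sub>v x) \<bullet>c w"
proof -
  have "x \<bullet>c (A *\<^sub>v w) = (\<Sum>i\<in>{0..<m}. \<Sum>l\<in>{0..<k}. x $ i * cnj (A $$ (i,l)) * cnj (w $ l))"
    using A x w by (simp add: scalar_prod_def cnj_sum sum_distrib_left mult.assoc)
  also have "\<dots> = (\<Sum>l\<in>{0..<k}. (\<Sum>i\<in>{0..<m}. cnj (A $$ (i,l)) * x $ i) * cnj (w $ l))"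
    by (subst sum.swap) (simp add: sum_distrib_left sum_distrib_right mult_ac)
  also have "\<dots> = (mat_adjoint A *\<^sub>v x) \<bullet>c w"
    using A x w by (auto simp: scalar_prod_def mat_adjoint_index intro!: sum.cong)
  finally show ?thesis .
qed

text \<open>For normal \<open>N\<close>, \<open>N u = 0\<close> forces \<open>N\<^sup>* u = 0\<close> since \<open>\<parallel>N\<^sup>* u\<parallel>\<^sup>2 = \<langle>N\<^sup>* N u, u\<rangle>\<close>;
  for \<open>u = N v\<close> this gives \<open>\<parallel>N v\<parallel>\<^sup>2 = \<langle>v, N\<^sup>* u\<rangle> = 0\<close>.\<close>

lemma normal_mat_kernel_square:
  fixes N :: "complex mat"
  assumes N: "N \<in> carrier_mat m m" and normal: "mat_adjoint N * N = N * mat_adjoint N"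
    and v: "v \<in> carrier_vec m" and NNv: "N *\<^sub>v (N *\<^sub>v v) = 0\<^sub>v m"
  shows "N *\<^sub>v v = 0\<^sub>v m"
proof -
  define u where "u = N *\<^sub>v v"
  have u: "u \<in> carrier_vec m" unfolding u_def using N v by simp
  have Nadj: "mat_adjoint N \<in> carrier_mat m m" using N by simp
  have "(mat_adjoint N *\<^sub>v u) \<bullet>c (mat_adjoint N *\<^sub>v u) = (N *\<^sub>v (mat_adjoint N *\<^sub>v u)) \<bullet>c u"
    using scalar_prod_mult_mat_vec_adjoint[OF Nadj _ u, of "mat_adjoint N *\<^sub>v u"] Nadj u by simp
  also have "N *\<^sub>v (mat_adjoint N *\<^sub>v u) = mat_adjoint N *\<^sub>v (N *\<^sub>v u)"
    using N Nadj u normal by (simp add: assoc_mult_mat_vec[of _ m m _ m, symmetric])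
  also have "\<dots> = 0\<^sub>v m" using NNv Nadj unfolding u_def by (simp add: mult_mat_vec_zero)
  finally have "mat_adjoint N *\<^sub>v u = 0\<^sub>v m"
    using u Nadj conjugate_square_eq_0_vec[of "mat_adjoint N *\<^sub>v u" m] by simp
  moreover have "v \<bullet>c (mat_adjoint N *\<^sub>v u) = u \<bullet>c u"
    using scalar_prod_mult_mat_vec_adjoint[OF Nadj v u] unfolding u_def by simp
  ultimately have "u \<bullet>c u = 0" using v by simp
  then show ?thesis using u conjugate_square_eq_0_vec unfolding u_def by blast
qed

lemma nilpotent_normal_mat_eq_zero:
  fixes N :: "complex mat"
  assumes N: "N \<in> carrier_mat m m" and normal: "mat_adjoint N * N = N * mat_adjoint N"
    and nil: "N ^\<^sub>m k = 0\<^sub>m m m"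
  shows "N = 0\<^sub>m m m"
proof -
  have "N *\<^sub>v v = 0\<^sub>v m" if "(N ^\<^sub>m Suc j) *\<^sub>v v = 0\<^sub>v m" "v \<in> carrier_vec m" for j v
    using that
  proof (induction j arbitrary: v)
    case 0 then show ?case using N by simp
  next
    case (Suc j)
    have "(N ^\<^sub>m Suc (Suc j)) *\<^sub>v v = (N ^\<^sub>m Suc j) *\<^sub>v (N *\<^sub>v v)"
      unfolding pow_mat.simps(2)[of N "Suc j"] using N Suc.prems(2) by (intro assoc_mult_mat_vec) auto
    then have "(N ^\<^sub>m Suc j) *\<^sub>v (N *\<^sub>v v) = 0\<^sub>v m" using Suc.prems(1) by simp
    then have "N *\<^sub>v (N *\<^sub>v v) = 0\<^sub>v m" using Suc.IH Suc.prems(2) N by simp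
    then show ?case by (rule normal_mat_kernel_square[OF N normal Suc.prems(2)])
  qed
  moreover have "(N ^\<^sub>m Suc k) *\<^sub>v v = 0\<^sub>v m" if "v \<in> carrier_vec m" for v
    using that N nil by (simp add: assoc_mult_mat_vec[of _ m m _ m] zero_mat_mult_vec)
  ultimately show ?thesis using N by (intro mat_eq_zero_if_mult_vec_zero) auto
qed

lemma mult_minus_one_mat:
  fixes A B :: "'a :: ring_1 mat"
  assumes A: "A \<in> carrier_mat m m" and B: "B \<in> carrier_mat m m"
  shows "(A - 1\<^sub>m m) * (B - 1\<^sub>m m) = (A * B - B) - (A - 1\<^sub>m m)"
proof -
  have "(A - 1\<^sub>m m) * (B - 1\<^sub>m m) = (A - 1\<^sub>m m) * B - (A - 1\<^sub>m m)"
    using A B mult_minus_distrib_mat[of "A - 1\<^sub>m m" m m B m "1\<^sub>m m"] by (simp add: minus_carrier_mat)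
  also have "(A - 1\<^sub>m m) * B = A * B - B"
    using A B by (simp add: minus_mult_distrib_mat[of _ m m])
  finally show ?thesis .
qed

lemma unipotent_unitary_mat_eq_one:
  fixes A :: "complex mat"
  assumes A: "A \<in> carrier_mat m m" and unitary: "mat_adjoint A * A = 1\<^sub>m m"
    and nil: "(A - 1\<^sub>m m) ^\<^sub>m k = 0\<^sub>m m m"
  shows "A = 1\<^sub>m m"
proof -
  have Aadj: "mat_adjoint A \<in> carrier_mat m m" using A by simp
  have unitary': "A * mat_adjoint A = 1\<^sub>m m" by (rule mat_mult_left_right_inverse[OF Aadj A unitary])
  have adj_N: "mat_adjoint (A - 1\<^sub>m m) = mat_adjoint A - 1\<^sub>m m"
    by (rule eq_matI) (use A in \<open>auto simp: mat_adjoint_index\<close>)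
  have "mat_adjoint (A - 1\<^sub>m m) * (A - 1\<^sub>m m) = (1\<^sub>m m - A) - (mat_adjoint A - 1\<^sub>m m)"
    unfolding adj_N mult_minus_one_mat[OF Aadj A] unitary ..
  also have "\<dots> = (1\<^sub>m m - mat_adjoint A) - (A - 1\<^sub>m m)"
  proof (rule eq_matI)
    fix i j assume "i < dim_row ((1\<^sub>m m - mat_adjoint A) - (A - 1\<^sub>m m))"
      "j < dim_col ((1\<^sub>m m - mat_adjoint A) - (A - 1\<^sub>m m))"
    then show "((1\<^sub>m m - A) - (mat_adjoint A - 1\<^sub>m m)) $$ (i,j) = ((1\<^sub>m m - mat_adjoint A) - (A - 1\<^sub>m m)) $$ (i,j)"
      using A by simp
  qed (use A in simp_all)
  also have "\<dots> = (A - 1\<^sub>m m) * mat_adjoint (A - 1\<^sub>m m)"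
    unfolding adj_N mult_minus_one_mat[OF A Aadj] unitary' ..
  finally have normal: "mat_adjoint (A - 1\<^sub>m m) * (A - 1\<^sub>m m) = (A - 1\<^sub>m m) * mat_adjoint (A - 1\<^sub>m m)" .
  have "A - 1\<^sub>m m = 0\<^sub>m m m"
    by (rule nilpotent_normal_mat_eq_zero[OF _ normal nil]) (use A in auto)
  show ?thesis
  proof (rule eq_matI)
    fix i j assume ij: "i < dim_row (1\<^sub>m m :: complex mat)" "j < dim_col (1\<^sub>m m :: complex mat)"
    then have "(A - 1\<^sub>m m) $$ (i,j) = 0" using \<open>A - 1\<^sub>m m = 0\<^sub>m m m\<close> by simp
    then show "A $$ (i,j) = 1\<^sub>m m $$ (i,j)" using A ij by simp
  qed (use A in auto)
qed

section \<open>The Siegel form and \<open>U(n,1)\<close>\<close>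

definition swap_ends :: "nat \<Rightarrow> nat \<Rightarrow> nat" where
  "swap_ends n i = (if i = 0 then n else if i = n then 0 else i)"

lemma Jmat_carrier [simp]:
  "Jmat n \<in> carrier_mat (n+1) (n+1)" "Jmat n \<in> carrier_mat (Suc n) (Suc n)"
  "dim_row (Jmat n) = Suc n" "dim_col (Jmat n) = Suc n"
  unfolding Jmat_def by simp_all

lemma Jmat_index:
  "i \<le> n \<Longrightarrow> j \<le> n \<Longrightarrow> Jmat n $$ (i,j) =
     (if (i = 0 \<and> j = n) \<or> (i = n \<and> j = 0) \<or> (i = j \<and> 0 < i \<and> i < n) then 1 else 0)"
  unfolding Jmat_def by auto

lemma Jmat_index_swap_ends:
  "1 \<le> n \<Longrightarrow> i \<le> n \<Longrightarrow> j \<le> n \<Longrightarrow> Jmat n $$ (i,j) = (if j = swap_ends n i then 1 else 0)"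
  unfolding Jmat_def swap_ends_def by auto

lemma sum_split_ends:
  fixes f :: "nat \<Rightarrow> 'a :: comm_monoid_add"
  assumes "1 \<le> n"
  shows "(\<Sum>k\<in>{0..<n+1}. f k) = f 0 + f n + (\<Sum>k\<in>{1..<n}. f k)"
proof -
  have "{0..<n+1} = insert 0 (insert n {1..<n})" using assms by auto
  then show ?thesis using assms by (simp add: add.assoc)
qed

lemma sum_shift_index_down:
  fixes g :: "nat \<Rightarrow> 'a :: comm_monoid_add"
  shows "(\<Sum>k\<in>{1..<n}. g (k - 1)) = (\<Sum>k\<in>{0..<n-1}. g k)"
proof (cases n)
  case (Suc m)
  have "(\<Sum>k\<in>{0+1..<m+1}. g (k - 1)) = (\<Sum>k\<in>{0..<m}. g (k + 1 - 1))"
    by (rule sum.shift_bounds_nat_ivl)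
  then show ?thesis using Suc by simp
qed simp

lemma sum_Jmat_row:
  assumes "1 \<le> n" "i \<le> n"
  shows "(\<Sum>l\<in>{0..<n+1}. Jmat n $$ (i,l) * f l) = (f (swap_ends n i) :: complex)"
proof -
  have "swap_ends n i \<in> {0..<n+1}" using assms unfolding swap_ends_def by auto
  moreover have "(\<Sum>l\<in>{0..<n+1}. Jmat n $$ (i,l) * f l) =
      (\<Sum>l\<in>{0..<n+1}. if l = swap_ends n i then f l else 0)"
    using assms by (intro sum.cong) (auto simp: Jmat_index_swap_ends)
  ultimately show ?thesis by simp
qed

lemma Jmat_mult_index:
  assumes M: "M \<in> carrier_mat (n+1) k" and "1 \<le> n" "i \<le> n" "j < k"
  shows "(Jmat n * M) $$ (i,j) = M $$ (swap_ends n i, j)"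
proof -
  have "(Jmat n * M) $$ (i,j) = (\<Sum>l\<in>{0..<n+1}. Jmat n $$ (i,l) * M $$ (l,j))"
    using assms by (intro index_mult_mat_sum) auto
  also have "\<dots> = M $$ (swap_ends n i, j)" by (rule sum_Jmat_row[OF assms(2,3)])
  finally show ?thesis .
qed

lemma Jmat_mult_vec_index:
  assumes z: "z \<in> carrier_vec (n+1)" and "1 \<le> n" "i \<le> n"
  shows "(Jmat n *\<^sub>v z) $ i = z $ swap_ends n i"
proof -
  have "(Jmat n *\<^sub>v z) $ i = (\<Sum>l\<in>{0..<n+1}. Jmat n $$ (i,l) * z $ l)"
    using assms by (intro index_mult_mat_vec_sum) auto
  also have "\<dots> = z $ swap_ends n i" by (rule sum_Jmat_row[OF assms(2,3)])
  finally show ?thesis .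
qed

lemma Jmat_adjoint [simp]: "mat_adjoint (Jmat n) = Jmat n"
  by (rule eq_matI) (auto simp: mat_adjoint_index Jmat_def)

lemma Jmat_squared: "1 \<le> n \<Longrightarrow> Jmat n * Jmat n = 1\<^sub>m (n+1)"
  by (rule eq_matI) (subst Jmat_mult_index, auto simp: Jmat_index_swap_ends swap_ends_def)

text \<open>\<open>gram_entry n M i j\<close> is the entry \<open>(i,j)\<close> of \<open>M\<^sup>* J M\<close>, i.e. \<open>\<langle>M e\<^sub>j, M e\<^sub>i\<rangle>\<close>.\<close>

definition gram_entry :: "nat \<Rightarrow> complex mat \<Rightarrow> nat \<Rightarrow> nat \<Rightarrow> complex" where
  "gram_entry n M i j = cnj (M $$ (0,i)) * M $$ (n,j) + cnj (M $$ (n,i)) * M $$ (0,j)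
     + (\<Sum>k\<in>{1..<n}. cnj (M $$ (k,i)) * M $$ (k,j))"

lemma form_mat_index:
  assumes M: "M \<in> carrier_mat (n+1) (n+1)" and n: "1 \<le> n" and ij: "i \<le> n" "j \<le> n"
  shows "(mat_adjoint M * Jmat n * M) $$ (i,j) = gram_entry n M i j"
proof -
  have "mat_adjoint M * Jmat n * M = mat_adjoint M * (Jmat n * M)"
    using M by (intro assoc_mult_mat) auto
  moreover have "(mat_adjoint M * (Jmat n * M)) $$ (i,j) =
      (\<Sum>k\<in>{0..<n+1}. mat_adjoint M $$ (i,k) * (Jmat n * M) $$ (k,j))"
    using M ij by (intro index_mult_mat_sum) auto
  moreover have "\<dots> = (\<Sum>k\<in>{0..<n+1}. cnj (M $$ (k,i)) * M $$ (swap_ends n k, j))"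
    using M n ij by (intro sum.cong refl) (subst Jmat_mult_index, auto simp: mat_adjoint_index)
  ultimately show ?thesis
    unfolding gram_entry_def sum_split_ends[OF n] by (auto simp: swap_ends_def intro!: sum.cong)
qed

lemma Un1_carrier: "A \<in> Un1 n \<Longrightarrow> A \<in> carrier_mat (Suc n) (Suc n)"
  unfolding Un1_def by auto

lemma Un1_form: "A \<in> Un1 n \<Longrightarrow> mat_adjoint A * Jmat n * A = Jmat n"
  unfolding Un1_def by auto

lemma Un1_iff_gram_entry:
  assumes M: "M \<in> carrier_mat (n+1) (n+1)" and n: "1 \<le> n"
  shows "M \<in> Un1 n \<longleftrightarrow> (\<forall>i\<le>n. \<forall>j\<le>n. gram_entry n M i j = Jmat n $$ (i,j))"
proof
  assume "M \<in> Un1 n"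
  then show "\<forall>i\<le>n. \<forall>j\<le>n. gram_entry n M i j = Jmat n $$ (i,j)"
    using form_mat_index[OF M n] Un1_form by metis
next
  assume "\<forall>i\<le>n. \<forall>j\<le>n. gram_entry n M i j = Jmat n $$ (i,j)"
  then have "mat_adjoint M * Jmat n * M = Jmat n"
    using M form_mat_index[OF M n] by (intro eq_matI) auto
  then show "M \<in> Un1 n" unfolding Un1_def using M by auto
qed

lemma herm_self:
  assumes z: "z \<in> carrier_vec (n+1)" and n: "1 \<le> n"
  shows "herm n z z = z $ n * cnj (z $ 0) + z $ 0 * cnj (z $ n) + (\<Sum>k\<in>{1..<n}. z $ k * cnj (z $ k))"
proof -
  have "herm n z z = (\<Sum>k\<in>{0..<n+1}. (Jmat n *\<^sub>v z) $ k * cnj (z $ k))"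
    unfolding herm_def scalar_prod_def using z by simp
  also have "\<dots> = (\<Sum>k\<in>{0..<n+1}. z $ swap_ends n k * cnj (z $ k))"
    using z n by (intro sum.cong refl) (subst Jmat_mult_vec_index, auto)
  finally show ?thesis
    unfolding sum_split_ends[OF n] by (auto simp: swap_ends_def intro!: sum.cong)
qed

lemma herm_Un1_invariant:
  assumes M: "M \<in> Un1 n" and z: "z \<in> carrier_vec (n+1)" and w: "w \<in> carrier_vec (n+1)"
  shows "herm n (M *\<^sub>v z) (M *\<^sub>v w) = herm n z w"
proof -
  have Mc: "M \<in> carrier_mat (n+1) (n+1)" using Un1_carrier[OF M] by simp
  have "herm n (M *\<^sub>v z) (M *\<^sub>v w) = (mat_adjoint M *\<^sub>v (Jmat n *\<^sub>v (M *\<^sub>v z))) \<bullet>c w"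
    unfolding herm_def using Mc z w by (intro scalar_prod_mult_mat_vec_adjoint) (auto intro!: mult_mat_vec_carrier)
  also have "mat_adjoint M *\<^sub>v (Jmat n *\<^sub>v (M *\<^sub>v z)) = (mat_adjoint M * Jmat n * M) *\<^sub>v z"
    using Mc z by (simp add: assoc_mult_mat_vec[of _ "Suc n" "Suc n" _ "Suc n"])
  finally show ?thesis unfolding Un1_form[OF M] herm_def .
qed

lemma one_Un1: "1\<^sub>m (n+1) \<in> Un1 n"
  unfolding Un1_def by simp

lemma Jmat_Un1: "1 \<le> n \<Longrightarrow> Jmat n \<in> Un1 n"
  unfolding Un1_def by (simp add: Jmat_squared)

lemma Un1_mult:
  assumes A: "A \<in> Un1 n" and B: "B \<in> Un1 n"
  shows "A * B \<in> Un1 n"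
proof -
  note Ac = Un1_carrier[OF A] and Bc = Un1_carrier[OF B]
  note assoc = assoc_mult_mat[of _ "Suc n" "Suc n" _ "Suc n" _ "Suc n"]
  have "mat_adjoint (A * B) * Jmat n * (A * B) = mat_adjoint B * (mat_adjoint A * Jmat n * A) * B"
    unfolding mat_adjoint_mult[OF Ac Bc] using Ac Bc by (simp add: assoc)
  also have "\<dots> = Jmat n"
    unfolding Un1_form[OF A] using Un1_form[OF B] Bc by (simp add: assoc)
  finally show ?thesis unfolding Un1_def using Ac Bc by auto
qed

text \<open>\<open>K\<^sup>* J K = J\<close> and \<open>J\<^sup>2 = 1\<close> give \<open>K\<^sup>-\<^sup>1 = J K\<^sup>* J\<close>.\<close>

definition Un1_inv :: "nat \<Rightarrow> complex mat \<Rightarrow> complex mat" where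
  "Un1_inv n K = Jmat n * mat_adjoint K * Jmat n"

lemma Un1_inv_carrier: "K \<in> Un1 n \<Longrightarrow> Un1_inv n K \<in> carrier_mat (Suc n) (Suc n)"
  unfolding Un1_inv_def using Un1_carrier by fastforce

lemma Un1_inv_mult:
  assumes K: "K \<in> Un1 n" and n: "1 \<le> n"
  shows "Un1_inv n K * K = 1\<^sub>m (Suc n)"
proof -
  note Kc = Un1_carrier[OF K]
  have "Un1_inv n K * K = Jmat n * (mat_adjoint K * Jmat n * K)"
    unfolding Un1_inv_def using Kc by (simp add: assoc_mult_mat[of _ "Suc n" "Suc n" _ "Suc n" _ "Suc n"])
  then show ?thesis unfolding Un1_form[OF K] using Jmat_squared[OF n] by simp
qed

lemma mult_Un1_inv:
  assumes K: "K \<in> Un1 n" and n: "1 \<le> n"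
  shows "K * Un1_inv n K = 1\<^sub>m (Suc n)"
  using mat_mult_left_right_inverse[OF Un1_inv_carrier[OF K] Un1_carrier[OF K] Un1_inv_mult[OF K n]] .

lemma Un1_inv_Un1:
  assumes K: "K \<in> Un1 n" and n: "1 \<le> n"
  shows "Un1_inv n K \<in> Un1 n"
proof -
  note Kc = Un1_carrier[OF K]
  note assoc = assoc_mult_mat[of _ "Suc n" "Suc n" _ "Suc n" _ "Suc n"]
  have JJ: "Jmat n * Jmat n = 1\<^sub>m (Suc n)" using Jmat_squared[OF n] by simp
  have KJK: "K * Jmat n * mat_adjoint K = Jmat n"
  proof -
    have "K * Jmat n * mat_adjoint K = K * Un1_inv n K * Jmat n"
      unfolding Un1_inv_def using Kc by (simp add: assoc JJ)
    then show ?thesis using mult_Un1_inv[OF K n] by simp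
  qed
  have "mat_adjoint (Un1_inv n K) = Jmat n * K * Jmat n"
    unfolding Un1_inv_def using Kc by (simp add: mat_adjoint_mult[of _ "Suc n" "Suc n" _ "Suc n"] assoc)
  then have "mat_adjoint (Un1_inv n K) * Jmat n * Un1_inv n K
      = Jmat n * (K * Jmat n * mat_adjoint K) * Jmat n"
    unfolding Un1_inv_def using Kc by (simp add: assoc JJ)
  also have "\<dots> = Jmat n" unfolding KJK using JJ by (simp add: assoc)
  finally show ?thesis unfolding Un1_def using Un1_inv_carrier[OF K] by auto
qed

section \<open>Heisenberg translations\<close>

lemma heis_carrier [simp]:
  "heis n \<tau> t \<in> carrier_mat (n+1) (n+1)" "heis n \<tau> t \<in> carrier_mat (Suc n) (Suc n)"
  "dim_row (heis n \<tau> t) = Suc n" "dim_col (heis n \<tau> t) = Suc n"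
  unfolding heis_def by simp_all

lemma heis_index:
  "i \<le> n \<Longrightarrow> j \<le> n \<Longrightarrow> heis n \<tau> t $$ (i,j) =
     (if i = j then 1
      else if i = 0 \<and> 0 < j \<and> j < n then - cnj (\<tau> $ (j-1))
      else if i = 0 \<and> j = n then (- sqnorm \<tau> + complex_of_real t * \<i>) / 2
      else if 0 < i \<and> i < n \<and> j = n then \<tau> $ (i-1)
      else 0)"
  unfolding heis_def by auto

lemma scalar_prod_eq_sum_shifted:
  assumes "\<sigma> \<in> carrier_vec (n-1)" "\<tau> \<in> carrier_vec (n-1)"
  shows "\<sigma> \<bullet>c \<tau> = (\<Sum>k\<in>{1..<n}. \<sigma> $ (k-1) * cnj (\<tau> $ (k-1)))"
  using assms unfolding scalar_prod_def by (subst sum_shift_index_down) auto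

lemma sqnorm_eq_sum_shifted:
  "\<tau> \<in> carrier_vec (n-1) \<Longrightarrow> sqnorm \<tau> = (\<Sum>k\<in>{1..<n}. cnj (\<tau> $ (k-1)) * \<tau> $ (k-1))"
  unfolding sqnorm_def by (simp add: scalar_prod_eq_sum_shifted mult.commute)

lemma sqnorm_real: "\<tau> \<in> carrier_vec (n-1) \<Longrightarrow> cnj (sqnorm \<tau>) = sqnorm \<tau>"
  by (simp add: sqnorm_eq_sum_shifted mult.commute)

lemma heis_Un1:
  assumes n: "1 \<le> n" and tau: "\<tau> \<in> carrier_vec (n-1)"
  shows "heis n \<tau> t \<in> Un1 n"
proof -
  let ?H = "heis n \<tau> t"
  have "gram_entry n ?H i j = Jmat n $$ (i,j)" if ij: "i \<le> n" "j \<le> n" for i j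
  proof -
    have sum: "(\<Sum>k\<in>{1..<n}. cnj (?H $$ (k,i)) * ?H $$ (k,j)) =
      (\<Sum>k\<in>{1..<n}. cnj (if k = i then 1 else if i = n then \<tau> $ (k-1) else 0) *
         (if k = j then 1 else if j = n then \<tau> $ (k-1) else 0))"
      using ij n by (intro sum.cong) (auto simp: heis_index)
    consider "i = 0" | "i = n" | "0 < i \<and> i < n" using ij by linarith
    then show ?thesis
    proof cases
      case 1
      then show ?thesis unfolding gram_entry_def sum using ij n by (auto simp: heis_index Jmat_index)
    next
      case 2
      then have sum': "(\<Sum>k\<in>{1..<n}. cnj (?H $$ (k,i)) * ?H $$ (k,j)) =
          (\<Sum>k\<in>{1..<n}. cnj (\<tau> $ (k-1)) * (if k = j then 1 else if j = n then \<tau> $ (k-1) else 0))"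
        unfolding sum by (intro sum.cong) auto
      consider "j = 0" | "j = n" | "0 < j \<and> j < n" using ij by linarith
      then show ?thesis
      proof cases
        case 1
        then show ?thesis unfolding gram_entry_def sum' using n \<open>i = n\<close> by (auto simp: heis_index Jmat_index)
      next
        case 2
        have "(\<Sum>k\<in>{1..<n}. cnj (\<tau> $ (k-1)) * (if k = j then 1 else if j = n then \<tau> $ (k-1) else 0))
           = sqnorm \<tau>" unfolding sqnorm_eq_sum_shifted[OF tau] using 2 by (intro sum.cong) auto
        then show ?thesis
          unfolding gram_entry_def sum' using n \<open>i = n\<close> 2 sqnorm_real[OF tau]
          by (auto simp: heis_index Jmat_index complex_eq_iff)
      next
        case 3
        have "(\<Sum>k\<in>{1..<n}. cnj (\<tau> $ (k-1)) * (if k = j then 1 else if j = n then \<tau> $ (k-1) else 0))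
           = cnj (\<tau> $ (j-1))"
          using 3 by (simp add: if_distrib[where f="\<lambda>x. _ * x"] sum.delta cong: if_cong)
        then show ?thesis unfolding gram_entry_def sum' using n \<open>i = n\<close> 3 by (auto simp: heis_index Jmat_index)
      qed
    next
      case 3
      then have "(\<Sum>k\<in>{1..<n}. cnj (?H $$ (k,i)) * ?H $$ (k,j)) =
          (\<Sum>k\<in>{1..<n}. if k = i then (if k = j then 1 else if j = n then \<tau> $ (k-1) else 0) else 0)"
        unfolding sum by (intro sum.cong) auto
      also have "\<dots> = (if i = j then 1 else if j = n then \<tau> $ (i-1) else 0)"
        using 3 by simp
      finally show ?thesis unfolding gram_entry_def using n ij 3 by (auto simp: heis_index Jmat_index)
    qed
  qed
  then show ?thesis using Un1_iff_gram_entry[of ?H n] n by auto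
qed

lemma cscalar_prod_swap:
  assumes "\<sigma> \<in> carrier_vec m" "\<tau> \<in> carrier_vec m"
  shows "\<tau> \<bullet>c \<sigma> = cnj (\<sigma> \<bullet>c (\<tau> :: complex vec))"
  using assms unfolding scalar_prod_def by (simp add: cnj_sum mult.commute)

lemma sqnorm_add:
  assumes "\<sigma> \<in> carrier_vec m" "\<tau> \<in> carrier_vec m"
  shows "sqnorm (\<sigma> + \<tau>) = sqnorm \<sigma> + sqnorm \<tau> + \<sigma> \<bullet>c \<tau> + \<tau> \<bullet>c \<sigma>"
  using assms unfolding sqnorm_def scalar_prod_def by (simp add: ring_distribs sum.distrib)

lemma heis_mult:
  assumes n: "1 \<le> n" and sigma: "\<sigma> \<in> carrier_vec (n-1)" and tau: "\<tau> \<in> carrier_vec (n-1)"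
  shows "heis n \<sigma> s * heis n \<tau> t = heis n (\<sigma> + \<tau>) (s + t + 2 * Im (\<sigma> \<bullet>c \<tau>))"
proof (rule eq_matI)
  let ?A = "heis n \<sigma> s" and ?B = "heis n \<tau> t"
  fix i j assume "i < dim_row (heis n (\<sigma> + \<tau>) (s + t + 2 * Im (\<sigma> \<bullet>c \<tau>)))"
    "j < dim_col (heis n (\<sigma> + \<tau>) (s + t + 2 * Im (\<sigma> \<bullet>c \<tau>)))"
  then have ij: "i \<le> n" "j \<le> n" by auto
  have sum: "(\<Sum>k\<in>{1..<n}. ?A $$ (i,k) * ?B $$ (k,j)) =
     (\<Sum>k\<in>{1..<n}. (if i = k then 1 else if i = 0 then - cnj (\<sigma> $ (k-1)) else 0) *
       (if k = j then 1 else if j = n then \<tau> $ (k-1) else 0))"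
    using n ij by (intro sum.cong) (auto simp: heis_index)
  have "(?A * ?B) $$ (i,j) = (\<Sum>k\<in>{0..<n+1}. ?A $$ (i,k) * ?B $$ (k,j))"
    using ij by (intro index_mult_mat_sum) auto
  also have "\<dots> = ?A $$ (i,0) * ?B $$ (0,j) + ?A $$ (i,n) * ?B $$ (n,j) +
     (\<Sum>k\<in>{1..<n}. (if i = k then 1 else if i = 0 then - cnj (\<sigma> $ (k-1)) else 0) *
       (if k = j then 1 else if j = n then \<tau> $ (k-1) else 0))"
    unfolding sum_split_ends[OF n] sum ..
  finally have prod: "(?A * ?B) $$ (i,j) = \<dots>" .
  have add: "(\<sigma> + \<tau>) $ k = \<sigma> $ k + \<tau> $ k" if "k < n - 1" for k
    using that sigma tau by simp
  consider "i = 0" "j = 0" | "i = 0" "0 < j" "j < n" | "i = 0" "j = n" | "0 < i" "i \<le> n"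
    using ij by linarith
  then show "(?A * ?B) $$ (i,j) = heis n (\<sigma> + \<tau>) (s + t + 2 * Im (\<sigma> \<bullet>c \<tau>)) $$ (i,j)"
  proof cases
    case 1
    have "(\<Sum>k\<in>{1..<n}. - cnj (\<sigma> $ (k-1)) * (if k = j then 1 else if j = n then \<tau> $ (k-1) else 0)) = 0"
      using 1 n by (intro sum.neutral) auto
    then show ?thesis unfolding prod using 1 n by (simp add: heis_index)
  next
    case 2
    have "(\<Sum>k\<in>{1..<n}. - cnj (\<sigma> $ (k-1)) * (if k = j then 1 else if j = n then \<tau> $ (k-1) else 0))
      = - cnj (\<sigma> $ (j-1))"
      using 2 by (simp add: if_distrib[where f="\<lambda>x. _ * x"] sum.delta cong: if_cong)
    then show ?thesis unfolding prod using 2 n add by (simp add: heis_index)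
  next
    case 3
    have "(\<Sum>k\<in>{1..<n}. - cnj (\<sigma> $ (k-1)) * (if k = j then 1 else if j = n then \<tau> $ (k-1) else 0))
      = - (\<tau> \<bullet>c \<sigma>)"
      unfolding scalar_prod_eq_sum_shifted[OF tau sigma] using 3 by (simp add: sum_negf mult.commute)
    then show ?thesis
      unfolding prod using 3 n sqnorm_add[OF sigma tau] cscalar_prod_swap[OF tau sigma]
      by (simp add: heis_index) (simp add: complex_eq_iff field_simps)
  next
    case 4
    have "(\<Sum>k\<in>{1..<n}. (if i = k then 1 else if i = 0 then - cnj (\<sigma> $ (k-1)) else 0) *
       (if k = j then 1 else if j = n then \<tau> $ (k-1) else 0))
      = (\<Sum>k\<in>{1..<n}. if k = i then (if k = j then 1 else if j = n then \<tau> $ (k-1) else 0) else 0)"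
      using 4 by (intro sum.cong) auto
    then show ?thesis unfolding prod using 4 n ij add by (auto simp: heis_index)
  qed
qed simp_all

lemma heis_eq_imp_eq:
  assumes "1 \<le> n" "heis n \<tau> t = heis n \<tau> s"
  shows "t = s"
proof -
  have "heis n \<tau> t $$ (0,n) = heis n \<tau> s $$ (0,n)" using assms(2) by simp
  then have "Im ((- sqnorm \<tau> + complex_of_real t * \<i>) / 2) = Im ((- sqnorm \<tau> + complex_of_real s * \<i>) / 2)"
    using assms(1) by (simp add: heis_index)
  then show ?thesis by simp
qed

lemma heis_commute_iff:
  assumes n: "1 \<le> n" and sigma: "\<sigma> \<in> carrier_vec (n-1)" and tau: "\<tau> \<in> carrier_vec (n-1)"
  shows "heis n \<sigma> s * heis n \<tau> t = heis n \<tau> t * heis n \<sigma> s \<longleftrightarrow> Im (\<sigma> \<bullet>c \<tau>) = 0"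
proof -
  have "\<tau> + \<sigma> = \<sigma> + \<tau>" using sigma tau by (rule comm_add_vec[symmetric])
  then have "heis n \<sigma> s * heis n \<tau> t = heis n \<tau> t * heis n \<sigma> s \<longleftrightarrow>
      heis n (\<sigma> + \<tau>) (s + t + 2 * Im (\<sigma> \<bullet>c \<tau>)) = heis n (\<sigma> + \<tau>) (t + s - 2 * Im (\<sigma> \<bullet>c \<tau>))"
    unfolding heis_mult[OF n sigma tau] heis_mult[OF n tau sigma] cscalar_prod_swap[OF sigma tau]
    by simp
  also have "\<dots> \<longleftrightarrow> Im (\<sigma> \<bullet>c \<tau>) = 0"
  proof
    assume "heis n (\<sigma> + \<tau>) (s + t + 2 * Im (\<sigma> \<bullet>c \<tau>)) = heis n (\<sigma> + \<tau>) (t + s - 2 * Im (\<sigma> \<bullet>c \<tau>))"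
    from heis_eq_imp_eq[OF n this] show "Im (\<sigma> \<bullet>c \<tau>) = 0" by simp
  qed (simp add: add.commute)
  finally show ?thesis .
qed

section \<open>Unipotent elements fixing \<open>\<infinity>\<close>\<close>

lemma Un1_fixing_e_inf_index:
  assumes n: "1 \<le> n" and M: "M \<in> Un1 n" and fixes_inf: "M *\<^sub>v e_inf n = e_inf n"
  shows Un1_fixing_e_inf_col_0: "i \<le> n \<Longrightarrow> M $$ (i,0) = (if i = 0 then 1 else 0)"
    and Un1_fixing_e_inf_row_n: "j \<le> n \<Longrightarrow> M $$ (n,j) = (if j = n then 1 else 0)"
proof -
  have Mc: "M \<in> carrier_mat (Suc n) (Suc n)" using Un1_carrier[OF M] .
  show col: "M $$ (i,0) = (if i = 0 then 1 else 0)" if "i \<le> n" for i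
  proof -
    have "(M *\<^sub>v e_inf n) $ i = e_inf n $ i" using fixes_inf by simp
    then show ?thesis using that Mc unfolding e_inf_def by simp
  qed
  assume j: "j \<le> n"
  have "(\<Sum>k\<in>{1..<n}. cnj (M $$ (k,0)) * M $$ (k,j)) = 0"
    by (rule sum.neutral) (use col n in auto)
  then have "gram_entry n M 0 j = M $$ (n,j)" unfolding gram_entry_def using col n by simp
  then show "M $$ (n,j) = (if j = n then 1 else 0)"
    using Un1_iff_gram_entry[of M n] M Mc j n by (auto simp: Jmat_index)
qed

definition middle_block :: "nat \<Rightarrow> 'a mat \<Rightarrow> 'a mat" where
  "middle_block n M = mat (n-1) (n-1) (\<lambda>(i,j). M $$ (i+1, j+1))"

lemma middle_block_carrier [simp]:
  "middle_block n M \<in> carrier_mat (n-1) (n-1)"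
  "dim_row (middle_block n M) = n - 1" "dim_col (middle_block n M) = n - 1"
  unfolding middle_block_def by simp_all

lemma middle_block_index [simp]:
  "i < n - 1 \<Longrightarrow> j < n - 1 \<Longrightarrow> middle_block n M $$ (i,j) = M $$ (i+1, j+1)"
  unfolding middle_block_def by simp

lemma middle_block_pow_mat:
  fixes N :: "'a :: comm_ring_1 mat"
  assumes N: "N \<in> carrier_mat (n+1) (n+1)" and n: "1 \<le> n"
    and col: "\<And>l. l \<le> n \<Longrightarrow> N $$ (l,0) = 0" and row: "\<And>j. j < n \<Longrightarrow> N $$ (n,j) = 0"
  shows "middle_block n (N ^\<^sub>m k) = middle_block n N ^\<^sub>m k"
proof (induction k)
  case 0
  show ?case using N by (intro eq_matI) (auto simp: middle_block_def)
next
  case (Suc k)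
  have col_pow: "(N ^\<^sub>m k) $$ (i,0) = 0" if "0 < i" "i < n" for i
  proof (cases k)
    case (Suc k')
    have "(N ^\<^sub>m k) $$ (i,0) = (\<Sum>l\<in>{0..<n+1}. (N ^\<^sub>m k') $$ (i,l) * N $$ (l,0))"
      unfolding Suc pow_mat.simps using N that by (intro index_mult_mat_sum[of _ "n+1" "n+1" _ "n+1"]) auto
    also have "\<dots> = 0" using col by (intro sum.neutral) auto
    finally show ?thesis .
  qed (use that N in simp)
  show ?case
  proof (rule eq_matI)
    fix i j assume "i < dim_row (middle_block n N ^\<^sub>m Suc k)" "j < dim_col (middle_block n N ^\<^sub>m Suc k)"
    then have ij: "i < n - 1" "j < n - 1" by auto
    have "(N ^\<^sub>m Suc k) $$ (i+1,j+1) = (\<Sum>l\<in>{0..<n+1}. (N ^\<^sub>m k) $$ (i+1,l) * N $$ (l,j+1))"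
      unfolding pow_mat.simps using N ij by (intro index_mult_mat_sum[of _ "n+1" "n+1" _ "n+1"]) auto
    also have "\<dots> = (\<Sum>l\<in>{1..<n}. (N ^\<^sub>m k) $$ (i+1,l) * N $$ (l,j+1))"
      unfolding sum_split_ends[OF n] using ij col_pow[of "i+1"] row[of "j+1"] by simp
    also have "\<dots> = (\<Sum>l\<in>{0..<n-1}. middle_block n (N ^\<^sub>m k) $$ (i,l) * middle_block n N $$ (l,j))"
      using ij by (subst sum_shift_index_down[symmetric]) (auto intro!: sum.cong)
    also have "\<dots> = (middle_block n N ^\<^sub>m Suc k) $$ (i,j)"
      unfolding Suc.IH pow_mat.simps using ij
      by (intro index_mult_mat_sum[of _ "n-1" "n-1" _ "n-1", symmetric]) auto
    finally show "middle_block n (N ^\<^sub>m Suc k) $$ (i,j) = (middle_block n N ^\<^sub>m Suc k) $$ (i,j)"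
      using ij by simp
  qed auto
qed

lemma middle_block_unitary:
  assumes n: "1 \<le> n" and M: "M \<in> Un1 n" and row: "\<And>j. j \<le> n \<Longrightarrow> M $$ (n,j) = (if j = n then 1 else 0)"
  shows "mat_adjoint (middle_block n M) * middle_block n M = 1\<^sub>m (n-1)"
proof (rule eq_matI)
  fix i j assume "i < dim_row (1\<^sub>m (n-1) :: complex mat)" "j < dim_col (1\<^sub>m (n-1) :: complex mat)"
  then have ij: "i < n - 1" "j < n - 1" by auto
  have "(mat_adjoint (middle_block n M) * middle_block n M) $$ (i,j)
      = (\<Sum>l\<in>{0..<n-1}. cnj (M $$ (l+1,i+1)) * M $$ (l+1,j+1))"
    using ij by (subst index_mult_mat_sum[of _ "n-1" "n-1" _ "n-1"]) (auto simp: mat_adjoint_index intro!: sum.cong)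
  also have "\<dots> = (\<Sum>k\<in>{1..<n}. cnj (M $$ (k,i+1)) * M $$ (k,j+1))"
    by (subst sum_shift_index_down[symmetric]) (auto intro!: sum.cong)
  also have "\<dots> = gram_entry n M (i+1) (j+1)"
    unfolding gram_entry_def using row ij by auto
  also have "\<dots> = Jmat n $$ (i+1,j+1)"
    using Un1_iff_gram_entry[of M n] M Un1_carrier[OF M] n ij by auto
  also have "\<dots> = 1\<^sub>m (n-1) $$ (i,j)" using ij by (auto simp: Jmat_index)
  finally show "(mat_adjoint (middle_block n M) * middle_block n M) $$ (i,j) = 1\<^sub>m (n-1) $$ (i,j)" .
qed auto

text \<open>Given the first column, the last row and the middle block, the remaining entries of
  an element of \<open>U(n,1)\<close> are forced by the form: row \<open>0\<close> by \<open>\<langle>M e\<^sub>n, M e\<^sub>i\<rangle> = 0\<close> and the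
  real part of the corner by \<open>\<langle>M e\<^sub>n, M e\<^sub>n\<rangle> = 0\<close>.\<close>

lemma Un1_eq_heis:
  assumes n: "1 \<le> n" and M: "M \<in> Un1 n"
    and col: "\<And>i. i \<le> n \<Longrightarrow> M $$ (i,0) = (if i = 0 then 1 else 0)"
    and row: "\<And>j. j \<le> n \<Longrightarrow> M $$ (n,j) = (if j = n then 1 else 0)"
    and mid: "middle_block n M = 1\<^sub>m (n-1)"
  shows "M = heis n (vec (n-1) (\<lambda>l. M $$ (l+1, n))) (2 * Im (M $$ (0,n)))"
    (is "M = heis n ?\<tau> ?t")
proof -
  have Mc: "M \<in> carrier_mat (n+1) (n+1)" using Un1_carrier[OF M] by simp
  have gram: "gram_entry n M i j = Jmat n $$ (i,j)" if "i \<le> n" "j \<le> n" for i j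
    using Un1_iff_gram_entry[OF Mc n] M that by auto
  have mid_index: "M $$ (k,i) = (if k = i then 1 else 0)" if "0 < k" "k < n" "0 < i" "i < n" for k i
    using arg_cong[OF mid, of "\<lambda>A. A $$ (k-1,i-1)"] that by auto
  have tau: "?\<tau> \<in> carrier_vec (n-1)" by simp
  have tau_index: "?\<tau> $ (k-1) = M $$ (k,n)" if "0 < k" "k < n" for k
  proof -
    have "Suc (k - 1) = k" using that by simp
    then show ?thesis using that by simp
  qed
  have row_0: "M $$ (0,i) = - cnj (M $$ (i,n))" if i: "0 < i" "i < n" for i
  proof -
    have "(\<Sum>k\<in>{1..<n}. cnj (M $$ (k,i)) * M $$ (k,n)) = (\<Sum>k\<in>{1..<n}. if k = i then M $$ (k,n) else 0)"
      using i mid_index by (intro sum.cong) auto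
    then have "gram_entry n M i n = cnj (M $$ (0,i)) + M $$ (i,n)"
      unfolding gram_entry_def using row i by simp
    moreover have "gram_entry n M i n = 0" using gram[of i n] i by (simp add: Jmat_index)
    ultimately have "cnj (M $$ (0,i)) = - M $$ (i,n)" by (simp add: add_eq_0_iff)
    then show ?thesis by (metis complex_cnj_cnj complex_cnj_minus)
  qed
  have "sqnorm ?\<tau> = (\<Sum>k\<in>{1..<n}. cnj (M $$ (k,n)) * M $$ (k,n))"
    unfolding sqnorm_eq_sum_shifted[OF tau] by (intro sum.cong) (auto simp: tau_index)
  moreover have "gram_entry n M n n = 0" using gram[of n n] n by (simp add: Jmat_index)
  ultimately have "cnj (M $$ (0,n)) + M $$ (0,n) + sqnorm ?\<tau> = 0"
    unfolding gram_entry_def using row n by (simp add: add.commute)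
  then have corner: "M $$ (0,n) = (- sqnorm ?\<tau> + complex_of_real ?t * \<i>) / 2"
    by (simp add: complex_eq_iff)
  show ?thesis
  proof (rule eq_matI)
    fix i j assume "i < dim_row (heis n ?\<tau> ?t)" "j < dim_col (heis n ?\<tau> ?t)"
    then have ij: "i \<le> n" "j \<le> n" by auto
    consider "j = 0" | "i = n" | "i = 0" "0 < j" | "0 < i" "i < n" "0 < j"
      using ij by linarith
    then show "M $$ (i,j) = heis n ?\<tau> ?t $$ (i,j)"
    proof cases
      case 1 then show ?thesis using ij col by (simp add: heis_index)
    next
      case 2 then show ?thesis using ij row by (simp add: heis_index)
    next
      case 3 then show ?thesis using ij n row_0 corner by (auto simp: heis_index)
    next
      case 4 then show ?thesis using ij mid_index by (auto simp: heis_index)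
    qed
  qed (use Mc in auto)
qed

lemma unipotent_Un1_fixing_e_inf_is_heis:
  assumes n: "1 \<le> n" and M: "M \<in> Un1 n" and unip: "unipotent n M"
    and fixes_inf: "M *\<^sub>v e_inf n = c \<cdot>\<^sub>v e_inf n"
  shows "\<exists>\<tau> t. \<tau> \<in> carrier_vec (n-1) \<and> M = heis n \<tau> t"
proof -
  have Mc: "M \<in> carrier_mat (n+1) (n+1)" using Un1_carrier[OF M] by simp
  have nil: "(M - 1\<^sub>m (n+1)) ^\<^sub>m (n+1) = 0\<^sub>m (n+1) (n+1)" using unip unfolding unipotent_def by simp
  have "c = 1"
    using unipotent_eigenvalue_eq_one[OF Mc nil _ _ fixes_inf]
    by (simp add: e_inf_def vec_eq_iff)
  then have fixes_inf': "M *\<^sub>v e_inf n = e_inf n" using fixes_inf by simp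
  note col = Un1_fixing_e_inf_col_0[OF n M fixes_inf'] and row = Un1_fixing_e_inf_row_n[OF n M fixes_inf']
  have N: "M - 1\<^sub>m (n+1) \<in> carrier_mat (n+1) (n+1)" using Mc by (intro minus_carrier_mat) auto
  have col_N: "(M - 1\<^sub>m (n+1)) $$ (l,0) = 0" if "l \<le> n" for l
    using that Mc col[OF that] by simp
  have row_N: "(M - 1\<^sub>m (n+1)) $$ (n,j) = 0" if "j < n" for j
    using that Mc row[of j] by simp
  have block_N: "middle_block n M - 1\<^sub>m (n-1) = middle_block n (M - 1\<^sub>m (n+1))"
    using Mc by (intro eq_matI) auto
  have "(middle_block n M - 1\<^sub>m (n-1)) ^\<^sub>m (n+1) = middle_block n ((M - 1\<^sub>m (n+1)) ^\<^sub>m (n+1))"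
    unfolding block_N by (rule middle_block_pow_mat[OF N n col_N row_N, symmetric])
  also have "\<dots> = 0\<^sub>m (n-1) (n-1)"
    unfolding nil by (intro eq_matI) auto
  finally have block_nil: "(middle_block n M - 1\<^sub>m (n-1)) ^\<^sub>m (n+1) = 0\<^sub>m (n-1) (n-1)" .
  have "middle_block n M = 1\<^sub>m (n-1)"
    by (rule unipotent_unitary_mat_eq_one[OF middle_block_carrier(1) middle_block_unitary[OF n M row] block_nil])
  from Un1_eq_heis[OF n M col row this] show ?thesis using vec_carrier by blast
qed

section \<open>Moving a boundary point to \<open>\<infinity>\<close>\<close>

lemma sum_cnj_mult_self_eq_0_iff:
  fixes f :: "'b \<Rightarrow> complex"
  assumes "finite A"
  shows "(\<Sum>k\<in>A. f k * cnj (f k)) = 0 \<longleftrightarrow> (\<forall>k\<in>A. f k = 0)"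
proof -
  have "(\<Sum>k\<in>A. f k * cnj (f k)) = of_real (\<Sum>k\<in>A. (cmod (f k))\<^sup>2)"
    unfolding of_real_sum complex_norm_square ..
  also have "\<dots> = 0 \<longleftrightarrow> (\<Sum>k\<in>A. (cmod (f k))\<^sup>2) = 0" by (rule of_real_eq_0_iff)
  also have "\<dots> \<longleftrightarrow> (\<forall>k\<in>A. f k = 0)" using assms by (simp add: sum_nonneg_eq_0_iff)
  finally show ?thesis .
qed

lemma herm_smult_self:
  assumes z: "z \<in> carrier_vec (n+1)" and n: "1 \<le> n"
  shows "herm n (a \<cdot>\<^sub>v z) (a \<cdot>\<^sub>v z) = (a * cnj a) * herm n z z"
proof -
  have "(\<Sum>k\<in>{1..<n}. (a \<cdot>\<^sub>v z) $ k * cnj ((a \<cdot>\<^sub>v z) $ k)) = (a * cnj a) * (\<Sum>k\<in>{1..<n}. z $ k * cnj (z $ k))"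
    unfolding sum_distrib_left using z by (intro sum.cong) (auto simp: ac_simps)
  then show ?thesis
    unfolding herm_self[OF smult_carrier_vec[THEN iffD2, OF z] n] herm_self[OF z n] using z n
    by (simp add: algebra_simps)
qed

lemma null_vec_last_zero:
  assumes n: "1 \<le> n" and z: "null_vec n z" and last: "z $ n = 0"
  shows "z = z $ 0 \<cdot>\<^sub>v e_inf n" and "z $ 0 \<noteq> 0"
proof -
  have zc: "z \<in> carrier_vec (n+1)" and z0: "z \<noteq> 0\<^sub>v (n+1)" and null: "herm n z z = 0"
    using z unfolding null_vec_def by auto
  have "(\<Sum>k\<in>{1..<n}. z $ k * cnj (z $ k)) = 0" using null herm_self[OF zc n] last by simp
  then have mid: "z $ k = 0" if "0 < k" "k < n" for k
    using that by (simp add: sum_cnj_mult_self_eq_0_iff)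
  show z_eq: "z = z $ 0 \<cdot>\<^sub>v e_inf n"
  proof (rule eq_vecI)
    fix i assume "i < dim_vec (z $ 0 \<cdot>\<^sub>v e_inf n)"
    then have "i = 0 \<or> i = n \<or> (0 < i \<and> i < n)" unfolding e_inf_def by auto
    then show "z $ i = (z $ 0 \<cdot>\<^sub>v e_inf n) $ i" using mid last n unfolding e_inf_def by auto
  qed (use zc in \<open>simp add: e_inf_def\<close>)
  show "z $ 0 \<noteq> 0"
  proof
    assume "z $ 0 = 0"
    then have "z = 0\<^sub>v (n+1)" using z_eq by (simp add: e_inf_def vec_eq_iff)
    with z0 show False ..
  qed
qed

text \<open>\<open>e\<^sub>n\<close> spans the boundary point \<open>0\<close> of the Siegel model.\<close>

lemma heis_mult_normalized_null_vec:
  assumes n: "1 \<le> n" and x: "x \<in> carrier_vec (n+1)" and last: "x $ n = 1" and null: "herm n x x = 0"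
  shows "heis n (vec (n-1) (\<lambda>l. - x $ (l+1))) (- 2 * Im (x $ 0)) *\<^sub>v x = unit_vec (n+1) n"
    (is "heis n ?\<tau> ?t *\<^sub>v x = _")
proof -
  define \<tau> where "\<tau> = vec (n-1) (\<lambda>l. - x $ (l+1))"
  let ?H = "heis n \<tau> ?t"
  define S where "S = (\<Sum>k\<in>{1..<n}. x $ k * cnj (x $ k))"
  have tau: "\<tau> \<in> carrier_vec (n-1)" unfolding \<tau>_def by simp
  have tau_index: "\<tau> $ k = - x $ (k+1)" if "k < n - 1" for k
    using that unfolding \<tau>_def by simp
  have sqnorm: "sqnorm \<tau> = S"
    unfolding sqnorm_eq_sum_shifted[OF tau] S_def
    by (intro sum.cong) (auto simp: tau_index)
  have "x $ 0 + cnj (x $ 0) + S = 0"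
    using null herm_self[OF x n] last unfolding S_def by (simp add: ac_simps)
  then have corner: "Re (x $ 0) + Re S / 2 = 0" "Im S = 0" by (auto simp: complex_eq_iff)
  show ?thesis unfolding \<tau>_def[symmetric]
  proof (rule eq_vecI)
    fix i assume "i < dim_vec (unit_vec (n+1) n :: complex vec)"
    then have i: "i \<le> n" by simp
    have "(?H *\<^sub>v x) $ i = (\<Sum>l\<in>{0..<n+1}. ?H $$ (i,l) * x $ l)"
      using x i by (intro index_mult_mat_vec_sum) auto
    also have "\<dots> = ?H $$ (i,0) * x $ 0 + ?H $$ (i,n) * x $ n + (\<Sum>l\<in>{1..<n}. ?H $$ (i,l) * x $ l)"
      by (rule sum_split_ends[OF n])
    finally have entry: "(?H *\<^sub>v x) $ i = \<dots>" .
    consider "i = 0" | "i = n" | "0 < i" "i < n" using i by linarith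
    then show "(?H *\<^sub>v x) $ i = unit_vec (n+1) n $ i"
    proof cases
      case 1
      have "(\<Sum>l\<in>{1..<n}. ?H $$ (i,l) * x $ l) = S"
        unfolding S_def using 1 n tau_index by (intro sum.cong) (auto simp: heis_index)
      then show ?thesis
        unfolding entry using 1 n last corner by (simp add: heis_index sqnorm complex_eq_iff)
    next
      case 2
      have "(\<Sum>l\<in>{1..<n}. ?H $$ (i,l) * x $ l) = 0"
        using 2 n by (intro sum.neutral) (auto simp: heis_index)
      then show ?thesis unfolding entry using 2 n last by (simp add: heis_index)
    next
      case 3
      have "(\<Sum>l\<in>{1..<n}. ?H $$ (i,l) * x $ l) = (\<Sum>l\<in>{1..<n}. if l = i then x $ l else 0)"
        using 3 n by (intro sum.cong) (auto simp: heis_index)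
      then show ?thesis unfolding entry using 3 n last tau_index by (simp add: heis_index)
    qed
  qed simp
qed

lemma Jmat_mult_unit_vec_last: "1 \<le> n \<Longrightarrow> Jmat n *\<^sub>v unit_vec (n+1) n = e_inf n"
  unfolding e_inf_def by (intro eq_vecI) (auto simp: Jmat_index)

lemma null_vec_to_e_inf:
  assumes n: "1 \<le> n" and z: "null_vec n z"
  shows "\<exists>K\<in>Un1 n. \<exists>c. c \<noteq> 0 \<and> K *\<^sub>v z = c \<cdot>\<^sub>v e_inf n"
proof (cases "z $ n = 0")
  case True
  then have "1\<^sub>m (n+1) *\<^sub>v z = z $ 0 \<cdot>\<^sub>v e_inf n" "z $ 0 \<noteq> 0"
    using null_vec_last_zero[OF n z] z unfolding null_vec_def by auto
  then show ?thesis using one_Un1 by blast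
next
  case False
  have zc: "z \<in> carrier_vec (n+1)" and null: "herm n z z = 0" using z unfolding null_vec_def by auto
  define x where "x = (1 / z $ n) \<cdot>\<^sub>v z"
  have xc: "x \<in> carrier_vec (n+1)" unfolding x_def using zc by simp
  have "x $ n = 1" unfolding x_def using zc False by simp
  moreover have "herm n x x = 0" unfolding x_def herm_smult_self[OF zc n] null by simp
  ultimately obtain H where H: "H \<in> Un1 n" and Hx: "H *\<^sub>v x = unit_vec (n+1) n"
    using heis_mult_normalized_null_vec[OF n xc] heis_Un1[OF n vec_carrier] by blast
  define K where "K = Jmat n * H"
  have K: "K \<in> Un1 n" unfolding K_def by (rule Un1_mult[OF Jmat_Un1[OF n] H])
  have Hc: "H \<in> carrier_mat (Suc n) (Suc n)" using Un1_carrier[OF H] .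
  have "K *\<^sub>v z = z $ n \<cdot>\<^sub>v (K *\<^sub>v x)"
    unfolding x_def K_def using Hc zc False by (simp add: mult_mat_vec[of _ "Suc n" "Suc n"] smult_smult_assoc)
  also have "K *\<^sub>v x = e_inf n"
    unfolding K_def using Hc xc Hx Jmat_mult_unit_vec_last[OF n]
    by (simp add: assoc_mult_mat_vec[of _ "Suc n" "Suc n" _ "Suc n"])
  finally show ?thesis using K False by blast
qed

section \<open>Commuting unipotent elements\<close>

lemma Un1_mult_left_cancel:
  assumes K: "K \<in> Un1 n" and n: "1 \<le> n"
    and A: "A \<in> carrier_mat (n+1) (n+1)" and B: "B \<in> carrier_mat (n+1) (n+1)"
  shows "K * A = K * B \<longleftrightarrow> A = B"
proof
  assume "K * A = K * B"
  then have "(Un1_inv n K * K) * A = (Un1_inv n K * K) * B"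
    using Un1_carrier[OF K] Un1_inv_carrier[OF K] A B
    by (simp add: assoc_mult_mat[of _ "Suc n" "Suc n" _ "Suc n" _ "Suc n"])
  then show "A = B" using Un1_inv_mult[OF K n] A B by simp
qed simp

lemma Un1_mult_right_cancel:
  assumes K: "K \<in> Un1 n" and n: "1 \<le> n"
    and A: "A \<in> carrier_mat (n+1) (n+1)" and B: "B \<in> carrier_mat (n+1) (n+1)"
  shows "A * K = B * K \<longleftrightarrow> A = B"
proof
  assume eq: "A * K = B * K"
  note assoc = assoc_mult_mat[of _ "Suc n" "Suc n" _ "Suc n" _ "Suc n"]
  have "A = A * K * Un1_inv n K"
    using Un1_carrier[OF K] Un1_inv_carrier[OF K] A mult_Un1_inv[OF K n] by (simp add: assoc)
  also have "\<dots> = B * (K * Un1_inv n K)"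
    unfolding eq using Un1_carrier[OF K] Un1_inv_carrier[OF K] B by (simp add: assoc)
  also have "\<dots> = B" using mult_Un1_inv[OF K n] B by simp
  finally show "A = B" .
qed simp

lemma commute_iff_conjugates_commute:
  assumes n: "1 \<le> n" and K: "K \<in> Un1 n" and S: "S \<in> Un1 n" and T: "T \<in> Un1 n"
    and G: "G \<in> carrier_mat (n+1) (n+1)" and H: "H \<in> carrier_mat (n+1) (n+1)"
    and KS: "K * S = G * K" and KT: "K * T = H * K"
  shows "S * T = T * S \<longleftrightarrow> G * H = H * G"
proof -
  note carriers = Un1_carrier[OF K] Un1_carrier[OF S] Un1_carrier[OF T] G H
  note assoc = assoc_mult_mat[of _ "Suc n" "Suc n" _ "Suc n" _ "Suc n"]
  have conj: "K * (A * B) = C * D * K" if "K * A = C * K" "K * B = D * K"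
    and "A \<in> carrier_mat (n+1) (n+1)" "B \<in> carrier_mat (n+1) (n+1)"
    and "C \<in> carrier_mat (n+1) (n+1)" "D \<in> carrier_mat (n+1) (n+1)" for A B C D
  proof -
    have "K * (A * B) = K * A * B" using carriers that(3-6) by (simp add: assoc)
    also have "\<dots> = C * (K * B)" unfolding that(1) using carriers that(3-6) by (simp add: assoc)
    also have "\<dots> = C * D * K" unfolding that(2) using carriers that(3-6) by (simp add: assoc)
    finally show ?thesis .
  qed
  have "S * T = T * S \<longleftrightarrow> K * (S * T) = K * (T * S)"
    using Un1_mult_left_cancel[OF K n, of "S * T" "T * S"] carriers by simp
  also have "\<dots> \<longleftrightarrow> G * H * K = H * G * K"
    using conj[OF KS KT] conj[OF KT KS] carriers by simp
  also have "\<dots> \<longleftrightarrow> G * H = H * G"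
    using Un1_mult_right_cancel[OF K n, of "G * H" "H * G"] carriers by simp
  finally show ?thesis .
qed

lemma unipotent_similar:
  assumes unip: "unipotent n T" and K: "K \<in> carrier_mat (n+1) (n+1)" and K': "K' \<in> carrier_mat (n+1) (n+1)"
    and inv: "K * K' = 1\<^sub>m (n+1)" "K' * K = 1\<^sub>m (n+1)"
  shows "unipotent n (K * T * K')"
proof -
  have T: "T \<in> carrier_mat (n+1) (n+1)" using unip unfolding unipotent_def by simp
  have "K * T * K' - 1\<^sub>m (n+1) = K * (T - 1\<^sub>m (n+1)) * K'"
    using K K' T inv by (simp add: mult_minus_distrib_mat[of _ "n+1" "n+1"] minus_mult_distrib_mat[of _ "n+1" "n+1"])
  then have "similar_mat_wit (K * T * K' - 1\<^sub>m (n+1)) (T - 1\<^sub>m (n+1)) K K'"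
    unfolding similar_mat_wit_def Let_def using K K' T inv by (auto intro: minus_carrier_mat)
  then have "(K * T * K' - 1\<^sub>m (n+1)) ^\<^sub>m (n+1) = K * (T - 1\<^sub>m (n+1)) ^\<^sub>m (n+1) * K'"
    by (rule similar_mat_wit_pow_id)
  then show ?thesis using unip K K' T unfolding unipotent_def by simp
qed

lemma conj_unipotent_to_heis:
  assumes n: "1 \<le> n" and K: "K \<in> Un1 n" and T: "T \<in> Un1 n" and unip: "unipotent n T"
    and z: "z \<in> carrier_vec (n+1)" and Tz: "fixes_pt T z"
    and Kz: "K *\<^sub>v z = c \<cdot>\<^sub>v e_inf n" and c: "c \<noteq> 0"
  shows "\<exists>\<tau> t. \<tau> \<in> carrier_vec (n-1) \<and> K * T = heis n \<tau> t * K"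
proof -
  obtain a where a: "T *\<^sub>v z = a \<cdot>\<^sub>v z" using Tz unfolding fixes_pt_def by blast
  define K' where "K' = Un1_inv n K"
  note Kc = Un1_carrier[OF K] and Tc = Un1_carrier[OF T]
  have K'c: "K' \<in> carrier_mat (Suc n) (Suc n)" unfolding K'_def by (rule Un1_inv_carrier[OF K])
  have K'K: "K' * K = 1\<^sub>m (Suc n)" and KK': "K * K' = 1\<^sub>m (Suc n)"
    unfolding K'_def using Un1_inv_mult[OF K n] mult_Un1_inv[OF K n] by auto
  have e: "e_inf n \<in> carrier_vec (Suc n)" unfolding e_inf_def by simp
  define M where "M = K * T * K'"
  have M: "M \<in> Un1 n" unfolding M_def K'_def by (intro Un1_mult K T Un1_inv_Un1[OF K n])
  have "z = (K' * K) *\<^sub>v z" using K'K z by simp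
  also have "\<dots> = K' *\<^sub>v (K *\<^sub>v z)" using K'c Kc z by simp
  also have "\<dots> = c \<cdot>\<^sub>v (K' *\<^sub>v e_inf n)" unfolding Kz by (rule mult_mat_vec[OF K'c e])
  finally have K'e: "K' *\<^sub>v e_inf n = (1/c) \<cdot>\<^sub>v z" using c by (simp add: smult_smult_assoc)
  have "M *\<^sub>v e_inf n = (1/c) \<cdot>\<^sub>v (K *\<^sub>v (T *\<^sub>v z))"
    unfolding M_def using Kc Tc K'c e z K'e by (simp add: assoc_mult_mat_vec[of _ "Suc n" "Suc n" _ "Suc n"] mult_mat_vec)
  also have "\<dots> = a \<cdot>\<^sub>v e_inf n"
    unfolding a using Kc z c by (simp add: mult_mat_vec Kz smult_smult_assoc)
  finally have Me: "M *\<^sub>v e_inf n = a \<cdot>\<^sub>v e_inf n" .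
  have "unipotent n M" unfolding M_def using unip Kc K'c KK' K'K by (intro unipotent_similar) auto
  then obtain \<tau> t where tau: "\<tau> \<in> carrier_vec (n-1)" and M_heis: "M = heis n \<tau> t"
    using unipotent_Un1_fixing_e_inf_is_heis[OF n M _ Me] by blast
  have "M * K = K * T * (K' * K)"
    unfolding M_def using Kc Tc K'c by (simp add: assoc_mult_mat[of _ "Suc n" "Suc n" _ "Suc n" _ "Suc n"])
  then have "K * T = heis n \<tau> t * K" unfolding K'K M_heis using Kc Tc by simp
  with tau show ?thesis by blast
qed

lemma commuting_Un1_fixes_unique_fixed_point:
  assumes n: "1 \<le> n" and S: "S \<in> Un1 n" and T: "T \<in> carrier_mat (n+1) (n+1)" and comm: "S * T = T * S"
    and z: "null_vec n z" and Tz: "fixes_pt T z"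
    and unique: "\<And>w. null_vec n w \<Longrightarrow> fixes_pt T w \<Longrightarrow> same_pt z w"
  shows "fixes_pt S z"
proof -
  have zc: "z \<in> carrier_vec (Suc n)" and z0: "z \<noteq> 0\<^sub>v (Suc n)" and null: "herm n z z = 0"
    using z unfolding null_vec_def by auto
  note Sc = Un1_carrier[OF S]
  obtain a where a: "T *\<^sub>v z = a \<cdot>\<^sub>v z" using Tz unfolding fixes_pt_def by blast
  have "S *\<^sub>v z \<noteq> 0\<^sub>v (Suc n)"
  proof
    assume "S *\<^sub>v z = 0\<^sub>v (Suc n)"
    then have "(Un1_inv n S * S) *\<^sub>v z = 0\<^sub>v (Suc n)"
      using Sc Un1_inv_carrier[OF S] zc by (simp add: mult_mat_vec_zero)
    then show False using Un1_inv_mult[OF S n] zc z0 by simp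
  qed
  moreover have "herm n (S *\<^sub>v z) (S *\<^sub>v z) = 0" using herm_Un1_invariant[OF S] zc null by simp
  ultimately have "null_vec n (S *\<^sub>v z)" unfolding null_vec_def using Sc zc by simp
  moreover have "T *\<^sub>v (S *\<^sub>v z) = a \<cdot>\<^sub>v (S *\<^sub>v z)"
  proof -
    have "T *\<^sub>v (S *\<^sub>v z) = (T * S) *\<^sub>v z" using T Sc zc by simp
    also have "\<dots> = S *\<^sub>v (T *\<^sub>v z)" unfolding comm[symmetric] using T Sc zc by simp
    finally show ?thesis unfolding a using Sc zc by (simp add: mult_mat_vec)
  qed
  ultimately have "same_pt z (S *\<^sub>v z)" using unique unfolding fixes_pt_def by blast
  then show ?thesis unfolding same_pt_def fixes_pt_def by blast
qed

lemma conj_common_fixed_point_to_heis: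
  assumes n: "1 \<le> n" and S: "S \<in> Un1 n" "unipotent n S" and T: "T \<in> Un1 n" "unipotent n T"
    and z: "null_vec n z" and Sz: "fixes_pt S z" and Tz: "fixes_pt T z"
  obtains K \<sigma> s \<tau> t where "K \<in> Un1 n" "same_pt (e_inf n) (K *\<^sub>v z)"
    and "\<sigma> \<in> carrier_vec (n-1)" "K * S = heis n \<sigma> s * K"
    and "\<tau> \<in> carrier_vec (n-1)" "K * T = heis n \<tau> t * K"
proof -
  obtain K c where K: "K \<in> Un1 n" and c: "c \<noteq> 0" and Kz: "K *\<^sub>v z = c \<cdot>\<^sub>v e_inf n"
    using null_vec_to_e_inf[OF n z] by blast
  have zc: "z \<in> carrier_vec (n+1)" using z unfolding null_vec_def by simp
  show ?thesis
    using conj_unipotent_to_heis[OF n K S zc Sz Kz c] conj_unipotent_to_heis[OF n K T zc Tz Kz c]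
      that[OF K] Kz unfolding same_pt_def by blast
qed

theorem lemma3p4:
  fixes n :: nat and S T :: "complex mat"
  assumes "1 \<le> n"
    and "S \<in> Un1 n" and "T \<in> Un1 n"
    and "unipotent n S" and "parabolic n S"
    and "unipotent n T" and "parabolic n T"
  shows "S * T = T * S \<longleftrightarrow> isotropic n S T"
proof
  assume comm: "S * T = T * S"
  obtain z where z: "null_vec n z" and Tz: "fixes_pt T z"
    and unique: "\<And>w. null_vec n w \<Longrightarrow> fixes_pt T w \<Longrightarrow> same_pt z w"
    using assms(7) unfolding parabolic_def by blast
  have Sz: "fixes_pt S z"
    using commuting_Un1_fixes_unique_fixed_point[OF assms(1,2) _ comm z Tz unique] Un1_carrier[OF assms(3)]
    by simp
  obtain K \<sigma> s \<tau> t where K: "K \<in> Un1 n" and Kz: "same_pt (e_inf n) (K *\<^sub>v z)"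
    and sigma: "\<sigma> \<in> carrier_vec (n-1)" and KS: "K * S = heis n \<sigma> s * K"
    and tau: "\<tau> \<in> carrier_vec (n-1)" and KT: "K * T = heis n \<tau> t * K"
    using conj_common_fixed_point_to_heis[OF assms(1,2,4,3,6) z Sz Tz] .
  have "Im (\<sigma> \<bullet>c \<tau>) = 0"
    using comm commute_iff_conjugates_commute[OF assms(1) K assms(2,3) _ _ KS KT]
      heis_commute_iff[OF assms(1) sigma tau] by simp
  with z Sz Tz K Kz sigma KS tau KT show "isotropic n S T" unfolding isotropic_def by blast
next
  assume "isotropic n S T"
  then obtain K \<tau> t \<sigma> s where K: "K \<in> Un1 n" and tau: "\<tau> \<in> carrier_vec (n-1)" and sigma: "\<sigma> \<in> carrier_vec (n-1)"
    and KT: "K * T = heis n \<tau> t * K" and KS: "K * S = heis n \<sigma> s * K" and Im: "Im (\<sigma> \<bullet>c \<tau>) = 0"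
    unfolding isotropic_def by blast
  show "S * T = T * S"
    using commute_iff_conjugates_commute[OF assms(1) K assms(2,3) _ _ KS KT] heis_commute_iff[OF assms(1) sigma tau] Im
    by simp
qed

end
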